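(* For fixed $a$ and $\lambda \rightarrow \infty$ with $|\arg(\lambda)| \leq \frac{1}{2}\pi - \delta$ \[ L_{W}^{\pm}(a,\lambda) \sim\frac{W(a,0)}{\lambda}\sum_{ s=0}^{\infty} \frac{\alpha_{s}(a)}{\lambda^{2s}}\pm \frac{W'(a,0)}{\lambda^{2}}\sum_{ s=0}^{\infty} \frac{\beta_{s}(a)}{\lambda^{2s}}, \] where $\alpha_{0}(a)=\beta_{0}(a)=1$, $\alpha_{1}(a)=\beta_{1}(a)=a$, and for $ s=0,1,2,\ldots$ \[ \alpha_{s+2}=a\alpha_{s+1}-\tfrac{1}{2}(s+1)(2s+1)\alpha_{s},\qquad \beta_{s+2}=a\beta_{s+1}-\tfrac{1}{2}(s+1)(2s+3)\beta_{s}, \] and \[ W\left(a,0\right)=2^{-3/4}\left|\frac{\Gamma\left(\tfrac{1}{4}+\tfrac{1}{2}ia\right)}{\Gamma\left(\tfrac{3}{4}+\tfrac{1}{2}ia\right)}\right|^{1/2},\quad W'\left(a,0\right)=-2^{-1/4}\left|\frac{\Gamma\left(\tfrac{3}{4}+\tfrac{1}{2}ia\right)}{\Gamma\left(\tfrac{1}{4}+\tfrac{1}{2}ia\right)}\right|^{1/2}. \]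
   Context: $a$ is real; $W(a,\pm t)$ are the Weber parabolic cylinder functions (DLMF Sect. 12.14), solutions of $y''+(\tfrac14 t^2-a)y=0$. $L_{W}^{\pm}(a,\lambda)=\int_{0}^{\infty} e^{-\lambda t} W(a,\pm t)dt$ for $|\arg\lambda|\le\tfrac12\pi$. $\delta$ denotes an arbitrary small positive constant. *)

theory Defs
  imports "HOL-Analysis.Analysis"
begin

fun weber_alpha :: "real \<Rightarrow> nat \<Rightarrow> real" where
  "weber_alpha a 0 = 1"
| "weber_alpha a (Suc 0) = a"
| "weber_alpha a (Suc (Suc s)) =
     a * weber_alpha a (Suc s) - (1/2) * (real s + 1) * (2 * real s + 1) * weber_alpha a s"

fun weber_beta :: "real \<Rightarrow> nat \<Rightarrow> real" where
  "weber_beta a 0 = 1"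
| "weber_beta a (Suc 0) = a"
| "weber_beta a (Suc (Suc s)) =
     a * weber_beta a (Suc s) - (1/2) * (real s + 1) * (2 * real s + 3) * weber_beta a s"

text \<open>Initial values W(a,0) and W'(a,0) (DLMF 12.14.2, 12.14.3).\<close>
definition W0 :: "real \<Rightarrow> real" where
  "W0 a = 2 powr (-3/4) *
     sqrt (norm (Gamma (1/4 + \<i> * complex_of_real (a/2)) / Gamma (3/4 + \<i> * complex_of_real (a/2))))"

definition W0' :: "real \<Rightarrow> real" where
  "W0' a = - (2 powr (-1/4) *
     sqrt (norm (Gamma (3/4 + \<i> * complex_of_real (a/2)) / Gamma (1/4 + \<i> * complex_of_real (a/2)))))"

text \<open>w is the Weber function W(a,.) with derivative w': the unique solution of
  y'' + (t^2/4 - a) y = 0 on the real line with y(0) = W(a,0), y'(0) = W'(a,0).\<close>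
definition is_weber_W :: "real \<Rightarrow> (real \<Rightarrow> real) \<Rightarrow> (real \<Rightarrow> real) \<Rightarrow> bool" where
  "is_weber_W a w w' \<longleftrightarrow>
     (\<forall>t. (w has_real_derivative w' t) (at t) \<and>
          (w' has_real_derivative ((a - t\<^sup>2 / 4) * w t)) (at t)) \<and>
     w 0 = W0 a \<and> w' 0 = W0' a"

text \<open>Laplace transform L_W^{\<sigma>}(a,\<lambda>), \<sigma> = 1 or -1.\<close>
definition weber_laplace :: "(real \<Rightarrow> real) \<Rightarrow> real \<Rightarrow> complex \<Rightarrow> complex" where
  "weber_laplace w \<sigma> z = integral {0..} (\<lambda>t. exp (- z * complex_of_real t) * complex_of_real (w (\<sigma> * t)))"

end

theory Submission
  imports Defs
begin

text \<open>Put v(t) = W(a, \<sigma> t) with \<sigma> = \<plusminus>1; it solves v'' = (a - t^2/4) v, and an energy estimate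
  shows that v and v' grow at most polynomially. Differentiating the equation expresses v^(k+2)
  through v^(k), v^(k-1), v^(k-2) with polynomial coefficients, so all derivatives grow
  polynomially, and at t = 0 the recurrence becomes the one for \<alpha>_s and \<beta>_s. Integrating by parts
  n = 2N + 1 times gives L v(\<lambda>) = \<Sum>_{k<n} v^(k)(0) / \<lambda>^(k+1) + L v^(n)(\<lambda>) / \<lambda>^n, and the last
  Laplace transform is bounded where |\<lambda>| \<ge> 1 and |arg \<lambda>| \<le> \<pi>/2 - \<delta>, since there Re \<lambda> \<ge> sin \<delta>.\<close>

definition polynomially_bounded :: "(real \<Rightarrow> real) \<Rightarrow> bool" where
  "polynomially_bounded f \<longleftrightarrow> (\<exists>C m. \<forall>t\<ge>0. \<bar>f t\<bar> \<le> C * (1 + t) ^ m)"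

lemma polynomially_bounded_common:
  assumes "polynomially_bounded f" "polynomially_bounded g"
  obtains C m where "\<And>t. t \<ge> 0 \<Longrightarrow> \<bar>f t\<bar> \<le> C * (1 + t) ^ m \<and> \<bar>g t\<bar> \<le> C * (1 + t) ^ m"
proof -
  obtain C1 m1 where f: "\<And>t. t \<ge> 0 \<Longrightarrow> \<bar>f t\<bar> \<le> C1 * (1 + t) ^ m1"
    using assms(1) unfolding polynomially_bounded_def by blast
  obtain C2 m2 where g: "\<And>t. t \<ge> 0 \<Longrightarrow> \<bar>g t\<bar> \<le> C2 * (1 + t) ^ m2"
    using assms(2) unfolding polynomially_bounded_def by blast
  have "C1 \<ge> 0" "C2 \<ge> 0" using f[of 0] g[of 0] by auto
  have "\<bar>f t\<bar> \<le> (C1 + C2) * (1 + t) ^ (m1 + m2) \<and> \<bar>g t\<bar> \<le> (C1 + C2) * (1 + t) ^ (m1 + m2)"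
    if t: "t \<ge> 0" for t
  proof -
    have "(1 + t) ^ m1 \<le> (1 + t) ^ (m1 + m2)" "(1 + t) ^ m2 \<le> (1 + t) ^ (m1 + m2)"
      using t by (auto intro!: power_increasing)
    then have "C1 * (1 + t) ^ m1 \<le> (C1 + C2) * (1 + t) ^ (m1 + m2)"
      and "C2 * (1 + t) ^ m2 \<le> (C1 + C2) * (1 + t) ^ (m1 + m2)"
      using \<open>C1 \<ge> 0\<close> \<open>C2 \<ge> 0\<close> t by (auto intro!: mult_mono)
    with f[OF t] g[OF t] show ?thesis by linarith
  qed
  then show thesis by (rule that)
qed

lemma polynomially_bounded_const: "polynomially_bounded (\<lambda>t. c)"
  unfolding polynomially_bounded_def by (intro exI[of _ "\<bar>c\<bar>"] exI[of _ 0]) auto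

lemma polynomially_bounded_ident: "polynomially_bounded (\<lambda>t. t)"
  unfolding polynomially_bounded_def by (intro exI[of _ 1] exI[of _ 1]) auto

lemma polynomially_bounded_diff:
  assumes "polynomially_bounded f" "polynomially_bounded g"
  shows "polynomially_bounded (\<lambda>t. f t - g t)"
proof -
  obtain C m where "\<And>t. t \<ge> 0 \<Longrightarrow> \<bar>f t\<bar> \<le> C * (1 + t) ^ m \<and> \<bar>g t\<bar> \<le> C * (1 + t) ^ m"
    using polynomially_bounded_common[OF assms] by blast
  then have "\<bar>f t - g t\<bar> \<le> (2 * C) * (1 + t) ^ m" if "t \<ge> 0" for t
    using that abs_triangle_ineq4[of "f t" "g t"] by fastforce
  then show ?thesis unfolding polynomially_bounded_def by blast
qed

lemma polynomially_bounded_mult: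
  assumes "polynomially_bounded f" "polynomially_bounded g"
  shows "polynomially_bounded (\<lambda>t. f t * g t)"
proof -
  obtain C m where b: "\<And>t. t \<ge> 0 \<Longrightarrow> \<bar>f t\<bar> \<le> C * (1 + t) ^ m \<and> \<bar>g t\<bar> \<le> C * (1 + t) ^ m"
    using polynomially_bounded_common[OF assms] by blast
  have "\<bar>f t * g t\<bar> \<le> (C * C) * (1 + t) ^ (m + m)" if t: "t \<ge> 0" for t
  proof -
    have "\<bar>f t * g t\<bar> \<le> (C * (1 + t) ^ m) * (C * (1 + t) ^ m)"
      unfolding abs_mult using b[OF t] by (intro mult_mono) auto
    then show ?thesis by (simp add: power_add mult_ac)
  qed
  then show ?thesis unfolding polynomially_bounded_def by blast
qed

lemma polynomially_bounded_if_continuous_and_eventually: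
  assumes "continuous_on {0..} f" "\<And>t. t \<ge> T \<Longrightarrow> \<bar>f t\<bar> \<le> C * (1 + t) ^ m"
  shows "polynomially_bounded f"
proof -
  obtain M where M: "\<And>t. t \<in> {0..T} \<Longrightarrow> \<bar>f t\<bar> \<le> M"
    using compact_imp_bounded[OF compact_continuous_image[OF
        continuous_on_subset[OF assms(1)] compact_Icc, of 0 T]]
    unfolding bounded_iff real_norm_def by fastforce
  have "\<bar>f t\<bar> \<le> (\<bar>M\<bar> + \<bar>C\<bar>) * (1 + t) ^ m" if t: "t \<ge> 0" for t
  proof -
    have "1 \<le> (1 + t) ^ m" using t by simp
    from mult_left_mono[OF this, of "\<bar>M\<bar> + \<bar>C\<bar>"]
    have "\<bar>M\<bar> + \<bar>C\<bar> \<le> (\<bar>M\<bar> + \<bar>C\<bar>) * (1 + t) ^ m" by simp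
    moreover have "C * (1 + t) ^ m \<le> (\<bar>M\<bar> + \<bar>C\<bar>) * (1 + t) ^ m"
      using t by (intro mult_right_mono) auto
    ultimately show ?thesis
      using M[of t] assms(2)[of t] t by (cases "t \<le> T") (auto intro: order_trans)
  qed
  then show ?thesis unfolding polynomially_bounded_def by blast
qed

lemma polynomial_le_exp:
  fixes c :: real
  assumes "c > 0"
  obtains B where "\<And>t. t \<ge> 0 \<Longrightarrow> (1 + t) ^ m \<le> B * exp (c * t)"
proof (cases "m = 0")
  case True
  with assms show thesis by (intro that[of 1]) auto
next
  case False
  define d where "d = min 1 (c / real m)"
  have d: "d > 0" using assms False by (simp add: d_def)
  have "(1 + t) ^ m \<le> (1 / d ^ m) * exp (c * t)" if t: "t \<ge> 0" for t
  proof -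
    have "d * (1 + t) \<le> 1 + c * t / real m"
      using t mult_right_mono[of d "c / real m" t] by (simp add: d_def algebra_simps)
    then have "(d * (1 + t)) ^ m \<le> (1 + c * t / real m) ^ m"
      using d t by (intro power_mono) auto
    also have "\<dots> \<le> exp (c * t)"
      using False assms t by (intro exp_ge_one_plus_x_over_n_power_n) (auto intro: order_trans[of _ 0])
    finally have "d ^ m * (1 + t) ^ m \<le> exp (c * t)" by (simp add: power_mult_distrib)
    then show ?thesis using d by (simp add: field_simps)
  qed
  with d show thesis by (intro that[of "1 / d ^ m"]) auto
qed

lemma dominated_integral_Ici:
  fixes f :: "real \<Rightarrow> 'a::euclidean_space"
  assumes f: "continuous_on {a..} f" and h: "h integrable_on {a..}"
    and le: "\<And>t. t \<ge> a \<Longrightarrow> norm (f t) \<le> h t"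
  shows "f integrable_on {a..}" "(\<lambda>k. integral {a..real k} f) \<longlonglongrightarrow> integral {a..} f"
proof -
  define fk where "fk = (\<lambda>k t. if t \<in> {a..real k} then f t else 0)"
  have fk: "(fk k has_integral integral {a..real k} f) {a..}" for k
    unfolding fk_def
    by (subst has_integral_restrict)
       (auto intro!: integrable_integral integrable_continuous_interval continuous_on_subset[OF f])
  have conv: "(\<lambda>k. fk k t) \<longlonglongrightarrow> f t" if "t \<in> {a..}" for t
  proof (rule tendsto_eventually)
    have "\<forall>\<^sub>F k in sequentially. t \<le> real k"
      by (meson eventually_sequentiallyI nat_ceiling_le_eq)
    then show "\<forall>\<^sub>F k in sequentially. fk k t = f t"
      by eventually_elim (use that in \<open>simp add: fk_def\<close>)
  qed
  have "\<And>k. fk k integrable_on {a..}" "\<And>k t. t \<in> {a..} \<Longrightarrow> norm (fk k t) \<le> h t"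
    using fk le order_trans[OF norm_ge_zero le] by (fastforce simp: fk_def)+
  note dc = dominated_convergence[OF this(1) h this(2) conv]
  show "f integrable_on {a..}" by (rule dc(1))
  show "(\<lambda>k. integral {a..real k} f) \<longlonglongrightarrow> integral {a..} f"
    using dc(2) by (simp add: integral_unique[OF fk])
qed

definition laplace :: "(real \<Rightarrow> real) \<Rightarrow> complex \<Rightarrow> complex" where
  "laplace g z = integral {0..} (\<lambda>t. exp (- z * of_real t) * of_real (g t))"

lemma laplace_integrand_bound:
  fixes c :: real
  assumes "polynomially_bounded g" "c > 0"
  obtains B where "\<And>z t. c \<le> Re z \<Longrightarrow> 0 \<le> t \<Longrightarrow>
    norm (exp (- z * of_real t) * of_real (g t)) \<le> B * exp (- (c / 2) * t)"
proof -
  obtain C m where g: "\<And>t. t \<ge> 0 \<Longrightarrow> \<bar>g t\<bar> \<le> C * (1 + t) ^ m"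
    using assms(1) unfolding polynomially_bounded_def by blast
  obtain B where B: "\<And>t. t \<ge> 0 \<Longrightarrow> (1 + t) ^ m \<le> B * exp ((c / 2) * t)"
    by (rule polynomial_le_exp[of "c / 2" m]) (use assms(2) in auto)
  have "C \<ge> 0" using g[of 0] by auto
  have "norm (exp (- z * of_real t) * of_real (g t)) \<le> C * B * exp (- (c / 2) * t)"
    if z: "c \<le> Re z" and t: "0 \<le> t" for z t
  proof -
    have "norm (exp (- z * of_real t) * of_real (g t)) = exp (- Re z * t) * \<bar>g t\<bar>"
      by (simp add: norm_mult norm_exp_eq_Re)
    also have "\<dots> \<le> exp (- c * t) * (C * (B * exp ((c / 2) * t)))"
    proof (rule mult_mono)
      show "exp (- Re z * t) \<le> exp (- c * t)" using z t by (simp add: mult_right_mono)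
      show "\<bar>g t\<bar> \<le> C * (B * exp ((c / 2) * t))"
        using g[OF t] mult_left_mono[OF B[OF t] \<open>C \<ge> 0\<close>] by linarith
    qed auto
    also have "\<dots> = C * B * exp (- (c / 2) * t)"
      by (simp add: mult_ac flip: exp_add)
    finally show ?thesis .
  qed
  then show thesis by (rule that)
qed

lemma laplace_integral_convergent:
  assumes "continuous_on {0..} g" "polynomially_bounded g" "Re z > 0"
  shows "(\<lambda>t. exp (- z * of_real t) * of_real (g t)) integrable_on {0..}"
    and "(\<lambda>k. integral {0..real k} (\<lambda>t. exp (- z * of_real t) * of_real (g t))) \<longlonglongrightarrow> laplace g z"
proof -
  obtain B where B: "\<And>t. 0 \<le> t \<Longrightarrow>
      norm (exp (- z * of_real t) * of_real (g t)) \<le> B * exp (- (Re z / 2) * t)"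
    by (metis laplace_integrand_bound[OF assms(2,3)] order_refl)
  have "(\<lambda>t. B * exp (- (Re z / 2) * t)) integrable_on {0..}"
    using integrable_on_exp_minus_to_infinity[of "Re z / 2" 0] assms(3)
    by (intro integrable_on_mult_right) auto
  note dominated_integral_Ici[OF _ this B]
  moreover have "continuous_on {0..} (\<lambda>t. exp (- z * of_real t) * of_real (g t))"
    by (intro continuous_intros assms(1))
  ultimately show "(\<lambda>t. exp (- z * of_real t) * of_real (g t)) integrable_on {0..}"
    and "(\<lambda>k. integral {0..real k} (\<lambda>t. exp (- z * of_real t) * of_real (g t))) \<longlonglongrightarrow> laplace g z"
    by (auto simp: laplace_def)
qed

lemma laplace_bounded:
  fixes c :: real
  assumes "continuous_on {0..} g" "polynomially_bounded g" "c > 0"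
  obtains K where "\<And>z. c \<le> Re z \<Longrightarrow> norm (laplace g z) \<le> K"
proof -
  obtain B where B: "\<And>z t. c \<le> Re z \<Longrightarrow> 0 \<le> t \<Longrightarrow>
      norm (exp (- z * of_real t) * of_real (g t)) \<le> B * exp (- (c / 2) * t)"
    using laplace_integrand_bound[OF assms(2,3)] by blast
  have h: "((\<lambda>t. B * exp (- (c / 2) * t)) has_integral B * (2 / c)) {0..}"
    using has_integral_mult_right[OF has_integral_exp_minus_to_infinity[of "c / 2" 0]] assms(3)
    by simp
  have "norm (laplace g z) \<le> B * (2 / c)" if z: "c \<le> Re z" for z
  proof -
    have "norm (laplace g z) \<le> integral {0..} (\<lambda>t. B * exp (- (c / 2) * t))"
      unfolding laplace_def using assms(3) z h
      by (intro integral_norm_bound_integral laplace_integral_convergent(1) assms(1,2) B) auto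
    also have "\<dots> = B * (2 / c)" using h by (rule integral_unique)
    finally show ?thesis .
  qed
  then show thesis by (rule that)
qed

lemma laplace_integrand_tendsto_0:
  assumes "polynomially_bounded g" "Re z > 0"
  shows "(\<lambda>k. exp (- z * of_real (real k)) * of_real (g (real k))) \<longlonglongrightarrow> 0"
proof -
  obtain B where B: "\<And>t. 0 \<le> t \<Longrightarrow>
      norm (exp (- z * of_real t) * of_real (g t)) \<le> B * exp (- (Re z / 2) * t)"
    by (metis laplace_integrand_bound[OF assms] order_refl)
  have "filterlim (\<lambda>k. - (Re z / 2) * real k) at_bot sequentially"
    by (rule filterlim_tendsto_neg_mult_at_bot[OF tendsto_const _ filterlim_real_sequentially])
       (use assms(2) in simp)
  then have "(\<lambda>k. B * exp (- (Re z / 2) * real k)) \<longlonglongrightarrow> 0"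
    by (rule tendsto_mult_right_zero[OF filterlim_compose[OF exp_at_bot]])
  moreover have "\<forall>\<^sub>F k in sequentially. norm (exp (- z * of_real (real k)) * of_real (g (real k)))
      \<le> B * exp (- (Re z / 2) * real k)"
    by (intro always_eventually allI B) simp
  ultimately show ?thesis by (rule Lim_null_comparison[rotated])
qed

lemma laplace_deriv:
  assumes g: "\<And>t. (g has_real_derivative g' t) (at t)" and "continuous_on {0..} g'"
    and "polynomially_bounded g" "polynomially_bounded g'" and z: "Re z > 0"
  shows "laplace g' z = z * laplace g z - of_real (g 0)"
proof -
  define F where "F = (\<lambda>f t. exp (- z * of_real t) * of_real (f t))"
  have cont_g: "continuous_on {0..} g"
    using g by (intro continuous_at_imp_continuous_on ballI DERIV_isCont) auto
  have ftc: "((\<lambda>t. F g' t - z * F g t) has_integral F g (real k) - F g 0) {0..real k}" for k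
  proof (intro fundamental_theorem_of_calculus)
    fix t
    have "((\<lambda>u. exp (- z * u)) has_field_derivative - z * exp (- z * of_real t)) (at (of_real t))"
      by (auto intro!: derivative_eq_intros)
    from has_vector_derivative_mult[OF has_vector_derivative_real_field[OF this]
        has_vector_derivative_of_real[OF g]]
    show "(F g has_vector_derivative F g' t - z * F g t) (at t within {0..real k})"
      by (auto intro: has_vector_derivative_at_within simp: F_def algebra_simps)
  qed simp
  have integrable: "F f integrable_on {0..real k}" if "continuous_on {0..} f" for f k
    unfolding F_def
    by (intro integrable_continuous_interval continuous_intros continuous_on_subset[OF that]) auto
  have parts: "integral {0..real k} (F g')
      = z * integral {0..real k} (F g) + (F g (real k) - F g 0)" for k
  proof -
    have "integral {0..real k} (F g') - z * integral {0..real k} (F g)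
        = integral {0..real k} (\<lambda>t. F g' t - z * F g t)"
      using integrable[OF cont_g] integrable[OF assms(2)]
      by (simp add: integral_diff integrable_on_mult_right)
    also have "\<dots> = F g (real k) - F g 0"
      by (rule integral_unique[OF ftc])
    finally show ?thesis by (simp add: algebra_simps)
  qed
  have "(\<lambda>k. z * integral {0..real k} (F g) + (F g (real k) - F g 0))
      \<longlonglongrightarrow> z * laplace g z + (0 - F g 0)"
    unfolding F_def
    by (intro tendsto_intros laplace_integral_convergent(2) laplace_integrand_tendsto_0 cont_g assms)
  then have "(\<lambda>k. integral {0..real k} (F g')) \<longlonglongrightarrow> z * laplace g z - F g 0"
    by (simp add: parts)
  moreover have "(\<lambda>k. integral {0..real k} (F g')) \<longlonglongrightarrow> laplace g' z"
    unfolding F_def by (intro laplace_integral_convergent(2) assms)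
  ultimately show ?thesis
    using LIMSEQ_unique by (fastforce simp: F_def)
qed

lemma laplace_expansion:
  assumes "\<And>k t. (g k has_real_derivative g (Suc k) t) (at t)"
    and "\<And>k. polynomially_bounded (g k)" and "Re z > 0"
  shows "laplace (g 0) z = (\<Sum>k<n. of_real (g k 0) / z ^ (k + 1)) + laplace (g n) z / z ^ n"
proof (induction n)
  case (Suc n)
  have "z \<noteq> 0" using assms(3) by auto
  have "continuous_on {0..} (g (Suc n))"
    using assms(1) by (intro continuous_at_imp_continuous_on ballI DERIV_isCont) blast
  then have "laplace (g (Suc n)) z = z * laplace (g n) z - of_real (g n 0)"
    using assms by (intro laplace_deriv)
  then have "laplace (g n) z / z ^ n
      = of_real (g n 0) / z ^ (n + 1) + laplace (g (Suc n)) z / z ^ Suc n"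
    using \<open>z \<noteq> 0\<close> by (simp add: field_simps)
  with Suc show ?case by simp
qed simp

lemma sum_lessThan_double:
  fixes f :: "nat \<Rightarrow> 'a::comm_monoid_add"
  shows "(\<Sum>k<2 * n. f k) = (\<Sum>i<n. f (2 * i)) + (\<Sum>i<n. f (2 * i + 1))"
  by (induction n) (simp_all add: algebra_simps)

lemma Re_ge_norm_mult_sin:
  fixes z :: complex
  assumes "z \<noteq> 0" "\<bar>Arg z\<bar> \<le> pi / 2 - \<delta>" "0 \<le> \<delta>"
  shows "norm z * sin \<delta> \<le> Re z"
proof -
  have "sin \<delta> \<le> cos \<bar>Arg z\<bar>"
    using assms cos_mono_le_eq[of "pi / 2 - \<delta>" "\<bar>Arg z\<bar>"] by (simp add: cos_sin_eq)
  then have "sin \<delta> \<le> Re z / norm z"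
    using cos_Arg[OF assms(1)] by simp
  then show ?thesis using assms(1) by (simp add: field_simps)
qed

locale weber_ode =
  fixes a :: real and v v' :: "real \<Rightarrow> real"
  assumes has_deriv: "\<And>t. (v has_real_derivative v' t) (at t)"
    and has_deriv': "\<And>t. (v' has_real_derivative (a - t\<^sup>2 / 4) * v t) (at t)"
begin

text \<open>Once t^2/4 - a \<ge> t^2/8, the energy satisfies energy' = t v^2 / 2 \<le> 4 energy / t, so
  energy t / t^4 decreases and v, v' grow at most like t^2.\<close>

definition energy :: "real \<Rightarrow> real" where
  "energy t = (v' t)\<^sup>2 + (t\<^sup>2 / 4 - a) * (v t)\<^sup>2"

lemma energy_has_real_derivative: "(energy has_real_derivative t / 2 * (v t)\<^sup>2) (at t)"
  unfolding energy_def[abs_def]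
  by (auto intro!: derivative_eq_intros has_deriv has_deriv' simp: algebra_simps power2_eq_square)

lemma potential_large:
  assumes "3 + 3 * \<bar>a\<bar> \<le> t"
  shows "t\<^sup>2 / 8 \<le> t\<^sup>2 / 4 - a" "1 \<le> t\<^sup>2 / 8"
proof -
  have "3 * t \<le> t * t" using assms by (intro mult_right_mono) auto
  then show "t\<^sup>2 / 8 \<le> t\<^sup>2 / 4 - a" "1 \<le> t\<^sup>2 / 8"
    using assms abs_ge_self[of a] by (auto simp: power2_eq_square)
qed

lemma square_le_energy:
  assumes "3 + 3 * \<bar>a\<bar> \<le> t"
  shows "(v t)\<^sup>2 \<le> energy t" "(v' t)\<^sup>2 \<le> energy t"
proof -
  have "1 * (v t)\<^sup>2 \<le> (t\<^sup>2 / 4 - a) * (v t)\<^sup>2"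
    using potential_large[OF assms] by (intro mult_right_mono) auto
  then show "(v t)\<^sup>2 \<le> energy t" "(v' t)\<^sup>2 \<le> energy t"
    using zero_le_power2[of "v t"] zero_le_power2[of "v' t"] unfolding energy_def by linarith+
qed

lemma energy_div_power4_antimono:
  assumes "3 + 3 * \<bar>a\<bar> \<le> s" "s \<le> t"
  shows "energy t / t ^ 4 \<le> energy s / s ^ 4"
proof (rule DERIV_nonpos_imp_nonincreasing[OF assms(2)])
  fix x assume "s \<le> x"
  with assms have x: "3 + 3 * \<bar>a\<bar> \<le> x" by linarith
  then have "x > 0" by linarith
  have "x\<^sup>2 / 2 * (v x)\<^sup>2 \<le> 4 * ((x\<^sup>2 / 4 - a) * (v x)\<^sup>2)"
    using mult_right_mono[OF potential_large(1)[OF x] zero_le_power2[of "v x"]] by simp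
  also have "\<dots> \<le> 4 * energy x" by (simp add: energy_def)
  finally have "x\<^sup>2 / 2 * (v x)\<^sup>2 \<le> 4 * energy x" .
  then have "(x / 2 * (v x)\<^sup>2 * x ^ 4 - energy x * (4 * x ^ 3)) / (x ^ 4)\<^sup>2 \<le> 0"
    using mult_right_mono[of _ _ "x ^ 3"] \<open>x > 0\<close>
    by (intro divide_nonpos_nonneg)
       (auto simp: power2_eq_square power3_eq_cube power4_eq_xxxx algebra_simps)
  moreover have "((\<lambda>t. energy t / t ^ 4) has_real_derivative
      (x / 2 * (v x)\<^sup>2 * x ^ 4 - energy x * (4 * x ^ 3)) / (x ^ 4)\<^sup>2) (at x)"
    using \<open>x > 0\<close>
    by (auto intro!: derivative_eq_intros energy_has_real_derivative simp: power2_eq_square)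
  ultimately show "\<exists>y. ((\<lambda>t. energy t / t ^ 4) has_real_derivative y) (at x) \<and> y \<le> 0"
    by blast
qed

lemma polynomially_bounded_solution: "polynomially_bounded v" "polynomially_bounded v'"
proof -
  define T where "T = 3 + 3 * \<bar>a\<bar>"
  define H where "H = energy T / T ^ 4"
  have "H \<ge> 0"
    unfolding H_def T_def using order_trans[OF zero_le_power2 square_le_energy(1)]
    by (intro divide_nonneg_nonneg) auto
  have bound: "\<bar>f t\<bar> \<le> (1 + H) * (1 + t) ^ 4" if "T \<le> t" "(f t)\<^sup>2 \<le> energy t" for f t
  proof -
    have "t > 0" using that by (auto simp: T_def)
    have "0 \<le> (\<bar>f t\<bar> - 1)\<^sup>2" by simp
    then have "\<bar>f t\<bar> \<le> 1 + (f t)\<^sup>2" by (simp add: power2_diff)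
    also have "\<dots> \<le> 1 + H * t ^ 4"
    proof -
      have "energy t \<le> H * t ^ 4"
        using energy_div_power4_antimono[of T t] that(1) \<open>t > 0\<close> by (simp add: H_def T_def field_simps)
      then show ?thesis using that(2) by linarith
    qed
    also have "\<dots> \<le> (1 + t) ^ 4 + H * (1 + t) ^ 4"
      using \<open>t > 0\<close> \<open>H \<ge> 0\<close> by (intro add_mono mult_left_mono power_mono one_le_power) auto
    also have "\<dots> = (1 + H) * (1 + t) ^ 4" by (simp add: algebra_simps)
    finally show ?thesis .
  qed
  have "continuous_on {0..} v" "continuous_on {0..} v'"
    using has_deriv has_deriv' by (auto intro!: continuous_at_imp_continuous_on DERIV_isCont)
  then show "polynomially_bounded v" "polynomially_bounded v'"
    using bound square_le_energy unfolding T_def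
    by (auto intro!: polynomially_bounded_if_continuous_and_eventually)
qed

text \<open>The k-th derivative of v'' = (a - t^2/4) v by Leibniz's rule. For k < 2 the truncated
  indices k - 1 and k - 2 occur only with vanishing coefficients.\<close>

fun v_deriv :: "nat \<Rightarrow> real \<Rightarrow> real" where
  "v_deriv 0 = v"
| "v_deriv (Suc 0) = v'"
| "v_deriv (Suc (Suc k)) = (\<lambda>t. (a - t\<^sup>2 / 4) * v_deriv k t - real k / 2 * t * v_deriv (k - 1) t
      - real k * (real k - 1) / 4 * v_deriv (k - 2) t)"

lemma v_deriv_has_real_derivative: "(v_deriv k has_real_derivative v_deriv (Suc k) t) (at t)"
proof (induction k arbitrary: t rule: v_deriv.induct)
  case 1
  then show ?case using has_deriv by simp
next
  case 2
  then show ?case using has_deriv' by simp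
next
  case (3 k)
  have "real k * v_deriv (Suc (k - 1)) t = real k * v_deriv k t"
    by (cases k) auto
  moreover have "real k * (real k - 1) * v_deriv (Suc (k - 2)) t = real k * (real k - 1) * v_deriv (k - 1) t"
    by (cases "k \<le> 1") (auto simp: Suc_diff_Suc numeral_2_eq_2 le_Suc_eq)
  moreover have "(v_deriv (Suc (Suc k)) has_real_derivative
      - (t / 2) * v_deriv k t + (a - t\<^sup>2 / 4) * v_deriv (Suc k) t
      - real k / 2 * (v_deriv (k - 1) t + t * v_deriv (Suc (k - 1)) t)
      - real k * (real k - 1) / 4 * v_deriv (Suc (k - 2)) t) (at t)"
    unfolding v_deriv.simps(3)
    by (auto intro!: derivative_eq_intros 3[unfolded One_nat_def] simp: field_simps power2_eq_square)
  ultimately show ?case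
    by (cases k) (auto simp: field_simps elim!: DERIV_cong)
qed

lemma v_deriv_at_0:
  "v_deriv (2 * s) 0 = weber_alpha a s * v 0 \<and> v_deriv (Suc (2 * s)) 0 = weber_beta a s * v' 0"
proof (induction s rule: induct_nat_012)
  case (ge2 s)
  have "2 * Suc (Suc s) = Suc (Suc (2 * Suc s))" "Suc (2 * Suc (Suc s)) = Suc (Suc (Suc (2 * Suc s)))"
    "2 * Suc s - 2 = 2 * s" "Suc (2 * Suc s) - 2 = Suc (2 * s)"
    by simp_all
  then have "v_deriv (2 * Suc (Suc s)) 0
      = a * v_deriv (2 * Suc s) 0 - (2 * real s + 2) * (2 * real s + 1) / 4 * v_deriv (2 * s) 0"
    "v_deriv (Suc (2 * Suc (Suc s))) 0
      = a * v_deriv (Suc (2 * Suc s)) 0 - (2 * real s + 3) * (2 * real s + 2) / 4 * v_deriv (Suc (2 * s)) 0"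
    by (simp_all del: v_deriv.simps add: v_deriv.simps(3) algebra_simps)
  with ge2 show ?case by (simp add: field_simps)
qed (simp_all add: numeral_2_eq_2)

lemma polynomially_bounded_v_deriv: "polynomially_bounded (v_deriv k)"
proof (induction k rule: v_deriv.induct)
  case (3 k)
  have "v_deriv (Suc (Suc k)) = (\<lambda>t. (a - 1 / 4 * (t * t)) * v_deriv k t
      - real k / 2 * t * v_deriv (k - 1) t - real k * (real k - 1) / 4 * v_deriv (k - 2) t)"
    by (simp add: fun_eq_iff power2_eq_square)
  then show ?case
    by (simp only:) (intro polynomially_bounded_diff polynomially_bounded_mult
        polynomially_bounded_const polynomially_bounded_ident 3)
qed (simp_all add: polynomially_bounded_solution)

lemma continuous_on_v_deriv: "continuous_on S (v_deriv k)"
  using v_deriv_has_real_derivative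
  by (intro continuous_at_imp_continuous_on ballI DERIV_isCont) blast

lemma laplace_v_remainder:
  assumes "Re z > 0"
  shows "laplace v z
      - of_real (v 0) / z * (\<Sum>s<N. of_real (weber_alpha a s) / z ^ (2 * s))
      - of_real (v' 0) / z\<^sup>2 * (\<Sum>s<N. of_real (weber_beta a s) / z ^ (2 * s))
    = (of_real (v_deriv (2 * N) 0) + laplace (v_deriv (2 * N + 1)) z) / z ^ (2 * N + 1)"
proof -
  have "z \<noteq> 0" using assms by auto
  have "laplace v z = (\<Sum>k<2 * N + 1. of_real (v_deriv k 0) / z ^ (k + 1))
      + laplace (v_deriv (2 * N + 1)) z / z ^ (2 * N + 1)"
    using laplace_expansion[where g = v_deriv and n = "2 * N + 1", OF v_deriv_has_real_derivative
        polynomially_bounded_v_deriv assms] by simp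
  also have "(\<Sum>k<2 * N + 1. of_real (v_deriv k 0) / z ^ (k + 1))
      = (\<Sum>s<N. of_real (v_deriv (2 * s) 0) / z ^ (2 * s + 1))
      + (\<Sum>s<N. of_real (v_deriv (2 * s + 1) 0) / z ^ (2 * s + 2))
      + of_real (v_deriv (2 * N) 0) / z ^ (2 * N + 1)"
    by (simp add: sum_lessThan_double)
  also have "(\<Sum>s<N. of_real (v_deriv (2 * s) 0) / z ^ (2 * s + 1))
      = of_real (v 0) / z * (\<Sum>s<N. of_real (weber_alpha a s) / z ^ (2 * s))"
    unfolding sum_distrib_left using \<open>z \<noteq> 0\<close>
    by (intro sum.cong refl) (simp add: v_deriv_at_0)
  also have "(\<Sum>s<N. of_real (v_deriv (2 * s + 1) 0) / z ^ (2 * s + 2))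
      = of_real (v' 0) / z\<^sup>2 * (\<Sum>s<N. of_real (weber_beta a s) / z ^ (2 * s))"
    unfolding sum_distrib_left using \<open>z \<noteq> 0\<close>
    by (intro sum.cong refl) (simp add: v_deriv_at_0 power2_eq_square mult.assoc)
  finally show ?thesis by (simp add: add_divide_distrib)
qed

lemma laplace_v_asymptotic:
  assumes "\<delta> > 0"
  shows "\<exists>C R. \<forall>z. z \<noteq> 0 \<and> \<bar>Arg z\<bar> \<le> pi / 2 - \<delta> \<and> R \<le> norm z \<longrightarrow>
    norm (laplace v z
      - of_real (v 0) / z * (\<Sum>s<N. of_real (weber_alpha a s) / z ^ (2 * s))
      - of_real (v' 0) / z\<^sup>2 * (\<Sum>s<N. of_real (weber_beta a s) / z ^ (2 * s)))
    \<le> C / norm z ^ (2 * N + 1)"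
    (is "\<exists>C R. \<forall>z. _ \<longrightarrow> norm (?D z) \<le> _")
proof -
  \<comment> \<open>the min matters only for \<delta> > pi / 2, when the sector is empty\<close>
  define c where "c = sin (min \<delta> (pi / 2))"
  have "c > 0" unfolding c_def using assms pi_gt_zero by (intro sin_gt_zero) (auto simp: min_def)
  obtain K where K: "\<And>z. c \<le> Re z \<Longrightarrow> norm (laplace (v_deriv (2 * N + 1)) z) \<le> K"
    using laplace_bounded[OF continuous_on_v_deriv polynomially_bounded_v_deriv \<open>c > 0\<close>] by blast
  define E :: complex where "E = of_real (v_deriv (2 * N) 0)"
  have "norm (?D z) \<le> (norm E + K) / norm z ^ (2 * N + 1)"
    if z: "z \<noteq> 0" "\<bar>Arg z\<bar> \<le> pi / 2 - \<delta>" "1 \<le> norm z" for z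
  proof -
    have "\<delta> \<le> pi / 2" using z(2) by linarith
    then have "c \<le> norm z * c" using z(3) \<open>c > 0\<close> by (simp add: c_def)
    also have "\<dots> \<le> Re z"
      using Re_ge_norm_mult_sin[OF z(1,2)] assms \<open>\<delta> \<le> pi / 2\<close> by (simp add: c_def)
    finally have "c \<le> Re z" .
    have "norm (E + laplace (v_deriv (2 * N + 1)) z) \<le> norm E + K"
      using norm_triangle_ineq[of E "laplace (v_deriv (2 * N + 1)) z"] K[OF \<open>c \<le> Re z\<close>]
      by linarith
    moreover have "?D z = (E + laplace (v_deriv (2 * N + 1)) z) / z ^ (2 * N + 1)"
      using laplace_v_remainder \<open>c > 0\<close> \<open>c \<le> Re z\<close> by (simp add: E_def)
    ultimately show ?thesis
      by (simp add: norm_divide norm_mult norm_power divide_right_mono)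
  qed
  then show ?thesis by blast
qed

end

lemma weber_ode_reflect:
  assumes "weber_ode a w w'" "\<sigma>\<^sup>2 = 1"
  shows "weber_ode a (\<lambda>t. w (\<sigma> * t)) (\<lambda>t. \<sigma> * w' (\<sigma> * t))"
proof
  interpret weber_ode a w w' by (fact assms(1))
  fix t
  show "((\<lambda>t. w (\<sigma> * t)) has_real_derivative \<sigma> * w' (\<sigma> * t)) (at t)"
    using DERIV_chain2[OF has_deriv DERIV_cmult_Id[of \<sigma> t]] by (simp add: mult.commute)
  have "((\<lambda>t. \<sigma> * w' (\<sigma> * t)) has_real_derivative \<sigma> * ((a - (\<sigma> * t)\<^sup>2 / 4) * w (\<sigma> * t) * \<sigma>)) (at t)"
    by (intro DERIV_cmult DERIV_chain2[OF has_deriv' DERIV_cmult_Id])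
  moreover have "(\<sigma> * t)\<^sup>2 = t\<^sup>2" using assms(2) by (simp add: power_mult_distrib)
  then have "\<sigma> * ((a - (\<sigma> * t)\<^sup>2 / 4) * w (\<sigma> * t) * \<sigma>) = \<sigma>\<^sup>2 * ((a - t\<^sup>2 / 4) * w (\<sigma> * t))"
    by (simp add: power2_eq_square mult_ac)
  ultimately show "((\<lambda>t. \<sigma> * w' (\<sigma> * t)) has_real_derivative (a - t\<^sup>2 / 4) * w (\<sigma> * t)) (at t)"
    using assms(2) by simp
qed

theorem theorem4p1:
  fixes a \<delta> \<sigma> :: real and w w' :: "real \<Rightarrow> real"
  assumes "is_weber_W a w w'"
    and "\<sigma> = 1 \<or> \<sigma> = -1"
    and "\<delta> > 0"
  shows "(\<forall>z::complex. Re z > 0 \<longrightarrow>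
           (\<lambda>t. exp (- z * complex_of_real t) * complex_of_real (w (\<sigma> * t))) integrable_on {0..})
    \<and> (\<forall>N::nat. \<exists>C R::real. \<forall>z::complex.
          z \<noteq> 0 \<and> \<bar>Arg z\<bar> \<le> pi/2 - \<delta> \<and> norm z \<ge> R \<longrightarrow>
          norm ((weber_laplace w \<sigma> z
                - (complex_of_real (W0 a) / z) * (\<Sum>s<N. complex_of_real (weber_alpha a s) / z ^ (2 * s)))
                - complex_of_real \<sigma> * (complex_of_real (W0' a) / z\<^sup>2) *
                    (\<Sum>s<N. complex_of_real (weber_beta a s) / z ^ (2 * s)))
            \<le> C / norm z ^ (2 * N + 1))"
proof -
  have "weber_ode a w w'" and w0: "w 0 = W0 a" "w' 0 = W0' a"
    using assms(1) unfolding is_weber_W_def weber_ode_def by auto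
  then interpret v: weber_ode a "\<lambda>t. w (\<sigma> * t)" "\<lambda>t. \<sigma> * w' (\<sigma> * t)"
    using assms(2) by (intro weber_ode_reflect) auto
  have laplace_v: "weber_laplace w \<sigma> = laplace (\<lambda>t. w (\<sigma> * t))"
    by (simp add: fun_eq_iff weber_laplace_def laplace_def)
  show ?thesis
    using v.laplace_v_asymptotic[OF assms(3)] laplace_integral_convergent(1)[OF
        v.continuous_on_v_deriv[of _ 0] v.polynomially_bounded_v_deriv[of 0]]
    by (simp add: laplace_v w0 mult.assoc)
qed

end
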